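(* Under the standing setup with $\gamma>0$, the Nash equilibrium $(g^*,h^* )$ of the zero-sum game in which Georgia chooses $g\in[0,\underline s]$ to minimize $f(g,h)$ and Hank chooses $h\in[\overline s,1]$ to maximize $f(g,h)$ is as follows: (i) if $m(0,1)\ge0$, then $(g^*,h^* )=(0,1)$ if $q(0,1)\ge0$; $(g^*,h^* )=(0,\overline s)$ if $q(0,\overline s)\le0$; and $(g^*,h^* )=(0,r(0))$ otherwise; (ii) if $m(\underline s,1)\le0$, then $(g^*,h^* )=(\underline s,1)$; (iii) otherwise, $(g^*,h^* )=(w(1),1)$.
   Context: Standing setup. Fix $n\in\mathbb N$ and $W=[w_{ij}]\in\mathbb R^{n\times n}$ with $w_{ij}\ge0$, $w_{ii}=0$. Let $\|W\|_\infty=\max_i\sum_j|w_{ij}|$, $\|W\|_1=\max_j\sum_i|w_{ij}|$, let $\lambda$ be the spectral radius of $W$, and assume there is $c\in\mathbb R^n$ with all entries positive and $W^\top c=\lambda c$. Fix $\beta\ge\gamma\ge0$ with $1-\max\{\|W\|_\infty,\|W\|_1\}>\max\{2\beta,4\gamma\}$. Fix $s\in[0,1]^n$, $\overline s=\max_is_i$, $\underline s=\min_is_i$. Set $\widehat c_i=c_i/\sum_jc_j$, $\widehat s=\sum_i\widehat c_is_i$, $\chi=\sum_i\widehat c_is_i\sum_jw_{ij}$. Define $$f(g,h)=\frac{(1-2\beta+(h-g)\gamma)\widehat s-\chi+(h+g)\beta+(g^2-h^2)\gamma}{1-\lambda+(g-h)\gamma}\,c^\top\mathbf 1$$ (the centrality-weighted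 steady state of the opinion dynamics with sources $g,h$), and $$q(g,h)=(\beta+\gamma\widehat s-2\gamma h)(1-\lambda+\gamma g)+\gamma\big[(1-2\beta-g\gamma)\widehat s-\chi+g\beta+g^2\gamma\big]+\gamma^2h^2,$$ $$m(g,h)=(\beta-\gamma\widehat s+2\gamma g)(1-\lambda-h\gamma)+g^2\gamma^2-\gamma\big[(1-2\beta+h\gamma)\widehat s+h\beta-h^2\gamma-\chi\big],$$ $$r(g)=\frac{1-\lambda}{\gamma}+g-\frac{1}{\gamma}\sqrt{(1-\lambda)(1-\lambda-\beta+2g\gamma)-(2-\lambda-2\beta)\gamma\widehat s-2g\beta\gamma+\gamma\chi},$$ $$w(h)=\frac{1}{\gamma}\sqrt{(1-\lambda)(1-\lambda-2h\gamma-\beta)+(2-\lambda-2\beta)\gamma\widehat s+2h\beta\gamma-\chi\gamma}-\frac{1-\lambda}{\gamma}+h.$$ *)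

theory Defs
  imports "Jordan_Normal_Form.Spectral_Radius"
begin

definition norm_inf_mat :: "real mat \<Rightarrow> real" where
  "norm_inf_mat W = Max {(\<Sum>j<dim_col W. \<bar>W $$ (i,j)\<bar>) | i. i < dim_row W}"

definition norm_one_mat :: "real mat \<Rightarrow> real" where
  "norm_one_mat W = Max {(\<Sum>i<dim_row W. \<bar>W $$ (i,j)\<bar>) | j. j < dim_col W}"

definition spec_rad :: "real mat \<Rightarrow> real" where
  "spec_rad W = spectral_radius (map_mat complex_of_real W)"

definition chat :: "nat \<Rightarrow> real vec \<Rightarrow> nat \<Rightarrow> real" where
  "chat n c i = c $ i / (\<Sum>j<n. c $ j)"

definition shat :: "nat \<Rightarrow> real vec \<Rightarrow> real vec \<Rightarrow> real" where
  "shat n c s = (\<Sum>i<n. chat n c i * s $ i)"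

definition chi :: "nat \<Rightarrow> real mat \<Rightarrow> real vec \<Rightarrow> real vec \<Rightarrow> real" where
  "chi n W c s = (\<Sum>i<n. chat n c i * s $ i * (\<Sum>j<n. W $$ (i,j)))"

definition csum :: "nat \<Rightarrow> real vec \<Rightarrow> real" where
  "csum n c = (\<Sum>j<n. c $ j)"

(* The functions f, q, m, r, w of the paper; parameters:
   la = \<lambda>, be = \<beta>, ga = \<gamma>, sh = \<widehat>s, ch = \<chi>, C = c^T 1 *)
definition fss :: "real \<Rightarrow> real \<Rightarrow> real \<Rightarrow> real \<Rightarrow> real \<Rightarrow> real \<Rightarrow> real \<Rightarrow> real \<Rightarrow> real" where
  "fss la be ga sh ch C g h =
     ((1 - 2*be + (h - g)*ga) * sh - ch + (h + g)*be + (g^2 - h^2)*ga)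
       / (1 - la + (g - h)*ga) * C"

definition qf :: "real \<Rightarrow> real \<Rightarrow> real \<Rightarrow> real \<Rightarrow> real \<Rightarrow> real \<Rightarrow> real \<Rightarrow> real" where
  "qf la be ga sh ch g h =
     (be + ga*sh - 2*ga*h) * (1 - la + ga*g)
     + ga * ((1 - 2*be - g*ga)*sh - ch + g*be + g^2*ga) + ga^2 * h^2"

definition mf :: "real \<Rightarrow> real \<Rightarrow> real \<Rightarrow> real \<Rightarrow> real \<Rightarrow> real \<Rightarrow> real \<Rightarrow> real" where
  "mf la be ga sh ch g h =
     (be - ga*sh + 2*ga*g) * (1 - la - h*ga) + g^2 * ga^2
     - ga * ((1 - 2*be + h*ga)*sh + h*be - h^2*ga - ch)"

definition rf :: "real \<Rightarrow> real \<Rightarrow> real \<Rightarrow> real \<Rightarrow> real \<Rightarrow> real \<Rightarrow> real" where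
  "rf la be ga sh ch g =
     (1 - la)/ga + g
     - (1/ga) * sqrt ((1 - la)*(1 - la - be + 2*g*ga) - (2 - la - 2*be)*ga*sh
                      - 2*g*be*ga + ga*ch)"

definition wf :: "real \<Rightarrow> real \<Rightarrow> real \<Rightarrow> real \<Rightarrow> real \<Rightarrow> real \<Rightarrow> real" where
  "wf la be ga sh ch h =
     (1/ga) * sqrt ((1 - la)*(1 - la - 2*h*ga - be) + (2 - la - 2*be)*ga*sh
                    + 2*h*be*ga - ch*ga)
     - (1 - la)/ga + h"

definition nash_eq :: "(real \<Rightarrow> real \<Rightarrow> real) \<Rightarrow> real set \<Rightarrow> real set \<Rightarrow> real \<Rightarrow> real \<Rightarrow> bool" where
  "nash_eq F G H g h \<longleftrightarrow> g \<in> G \<and> h \<in> H \<and>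
     (\<forall>g'\<in>G. F g h \<le> F g' h) \<and> (\<forall>h'\<in>H. F g h' \<le> F g h)"

end

theory Submission
  imports Defs
begin

text \<open>
  For fixed g the payoff F(g,h) = N(h)/D(h) C is a quadratic over a positive linear function,
  and F(g,h') - F(g,h) has the sign of (h' - h) q(g,h') + \<gamma> D(h') (h' - h)^2. Hence h' is a
  best reply of Hank as soon as (h' - h) q(g,h') \<ge> 0 for every feasible h: q \<ge> 0 at the right
  end point, q \<le> 0 at the left one, or q = 0 in between; symmetrically m governs Georgia's
  reply. The case split of the theorem produces points meeting both conditions, because
  m(0,\<cdot>) is smallest on [0,1] at h = 1 and q + m \<ge> 0 along h = 1; r(0) and w(1) are the roots of
  q(0,\<cdot>) and m(\<cdot>,1) obtained by completing the square.
\<close>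

lemma add_sqrt_between:
  fixes p u v D :: real
  assumes "p \<le> u" "p \<le> v" "(u - p)^2 < D" "D < (v - p)^2"
  shows "u < p + sqrt D" "p + sqrt D < v"
proof -
  have "u - p < sqrt D"
    using assms(1,3) real_sqrt_less_mono[of "(u - p)^2" D] by simp
  then show "u < p + sqrt D" by simp
  have "sqrt D < v - p"
    using assms(2,4) real_sqrt_less_mono[of D "(v - p)^2"] by simp
  then show "p + sqrt D < v" by simp
qed

lemma diff_sqrt_between:
  fixes p u v D :: real
  assumes "u \<le> p" "v \<le> p" "(u - p)^2 < D" "D < (v - p)^2"
  shows "p - sqrt D < u" "v < p - sqrt D"
  using add_sqrt_between[of "-p" "-u" "-v" D] assms by (simp_all add: power2_commute)

lemma left_eigenvalue_le_norm_inf_mat: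
  fixes W :: "real mat" and c :: "real vec"
  assumes "n > 0" "W \<in> carrier_mat n n" "\<forall>i<n. \<forall>j<n. 0 \<le> W $$ (i,j)"
    and "c \<in> carrier_vec n" "\<forall>i<n. 0 < c $ i"
    and "transpose_mat W *\<^sub>v c = \<mu> \<cdot>\<^sub>v c"
  shows "\<mu> \<le> norm_inf_mat W"
proof -
  have dims: "dim_row W = n" "dim_col W = n" "dim_vec c = n" using assms(2,4) by auto
  have row_sum_le: "(\<Sum>j<n. W $$ (i,j)) \<le> norm_inf_mat W" if "i < n" for i
  proof -
    have "(\<Sum>j<n. W $$ (i,j)) = (\<Sum>j<dim_col W. \<bar>W $$ (i,j)\<bar>)"
      using dims assms(3) that by (intro sum.cong) auto
    also have "\<dots> \<le> norm_inf_mat W"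
      unfolding norm_inf_mat_def using that dims by (intro Max_ge) auto
    finally show ?thesis .
  qed
  have column: "\<mu> * c $ j = (\<Sum>i<n. W $$ (i,j) * c $ i)" if "j < n" for j
  proof -
    have "\<mu> * c $ j = (transpose_mat W *\<^sub>v c) $ j" using assms(6) that dims by simp
    also have "\<dots> = (\<Sum>i<n. W $$ (i,j) * c $ i)"
      using that dims by (simp add: scalar_prod_def lessThan_atLeast0)
    finally show ?thesis .
  qed
  have c_sum_pos: "0 < (\<Sum>j<n. c $ j)" using assms(1,5) by (intro sum_pos) auto
  have "\<mu> * (\<Sum>j<n. c $ j) = (\<Sum>j<n. \<Sum>i<n. W $$ (i,j) * c $ i)"
    by (simp add: sum_distrib_left column)
  also have "\<dots> = (\<Sum>i<n. c $ i * (\<Sum>j<n. W $$ (i,j)))"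
    by (subst sum.swap) (simp add: sum_distrib_left mult.commute)
  also have "\<dots> \<le> (\<Sum>i<n. c $ i * norm_inf_mat W)"
    using row_sum_le assms(5) by (intro sum_mono mult_left_mono) (auto simp: less_imp_le)
  also have "\<dots> = norm_inf_mat W * (\<Sum>j<n. c $ j)" by (simp add: sum_distrib_left mult.commute)
  finally show ?thesis using c_sum_pos by simp
qed

lemma Min_Max_entries_in:
  assumes "n > 0" "\<forall>i<n. s $ i \<in> A"
  shows "Min {s $ i | i. i < n} \<in> A" "Max {s $ i | i. i < n} \<in> A"
proof -
  have entries: "{s $ i | i. i < n} = (\<lambda>i. s $ i) ` {..<n}" by auto
  have "finite {s $ i | i. i < n}" "{s $ i | i. i < n} \<noteq> {}" "{s $ i | i. i < n} \<subseteq> A"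
    unfolding entries using assms by auto
  then show "Min {s $ i | i. i < n} \<in> A" "Max {s $ i | i. i < n} \<in> A"
    using Min_in Max_in by blast+
qed

locale opinion_payoff =
  fixes la be ga sh ch C :: real
begin

abbreviation "F \<equiv> fss la be ga sh ch C"
abbreviation "q \<equiv> qf la be ga sh ch"
abbreviation "m \<equiv> mf la be ga sh ch"
abbreviation "r \<equiv> rf la be ga sh ch"
abbreviation "w \<equiv> wf la be ga sh ch"
abbreviation den :: "real \<Rightarrow> real \<Rightarrow> real" where "den g h \<equiv> 1 - la + (g - h) * ga"

definition r_radicand :: "real \<Rightarrow> real" where
  "r_radicand g = (1 - la)*(1 - la - be + 2*g*ga) - (2 - la - 2*be)*ga*sh - 2*g*be*ga + ga*ch"

definition w_radicand :: "real \<Rightarrow> real" where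
  "w_radicand h = (1 - la)*(1 - la - 2*h*ga - be) + (2 - la - 2*be)*ga*sh + 2*h*be*ga - ch*ga"

lemma fss_diff_in_h:
  assumes "den g h' \<noteq> 0" "den g h \<noteq> 0"
  shows "F g h' - F g h
    = C * ((h' - h) * q g h' + ga * den g h' * (h' - h)^2) / (den g h' * den g h)"
  using assms unfolding fss_def qf_def by (simp add: field_simps power2_eq_square)

lemma fss_diff_in_g:
  assumes "den g' h \<noteq> 0" "den g h \<noteq> 0"
  shows "F g' h - F g h
    = C * ((g' - g) * m g' h - ga * den g' h * (g' - g)^2) / (den g' h * den g h)"
  using assms unfolding fss_def mf_def by (simp add: field_simps power2_eq_square)

lemma qf_completed_square: "q g h = (ga*h - (1 - la + ga*g))^2 - r_radicand g"
  unfolding qf_def r_radicand_def by (simp add: algebra_simps power2_eq_square)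

lemma mf_completed_square: "m g h = (ga*g - (ga*h - (1 - la)))^2 - w_radicand h"
  unfolding mf_def w_radicand_def by (simp add: algebra_simps power2_eq_square)

lemma rf_eq: "ga \<noteq> 0 \<Longrightarrow> ga * r g = 1 - la + ga*g - sqrt (r_radicand g)"
  unfolding rf_def r_radicand_def by (simp add: field_simps)

lemma wf_eq: "ga \<noteq> 0 \<Longrightarrow> ga * w h = ga*h - (1 - la) + sqrt (w_radicand h)"
  unfolding wf_def w_radicand_def by (simp add: field_simps)

end

locale opinion_game = opinion_payoff +
  assumes ga_pos: "0 < ga" and be_ge_ga: "ga \<le> be" and ga_lt: "ga < 1 - la"
    and C_nonneg: "0 \<le> C"
begin

lemma den_pos: "g \<in> {0..1} \<Longrightarrow> h \<in> {0..1} \<Longrightarrow> 0 < den g h"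
  using ga_pos ga_lt mult_right_mono[of "-1" "g - h" ga] by auto

lemma best_reply_of_q_sign:
  assumes "g \<in> {0..1}" "h \<in> {0..1}" "h' \<in> {0..1}" "0 \<le> (h' - h) * q g h'"
  shows "F g h \<le> F g h'"
proof -
  have den: "0 < den g h'" "0 < den g h" using den_pos assms by auto
  have "0 \<le> (h' - h) * q g h' + ga * den g h' * (h' - h)^2"
    using den assms(4) ga_pos by simp
  then have "0 \<le> C * ((h' - h) * q g h' + ga * den g h' * (h' - h)^2) / (den g h' * den g h)"
    using den C_nonneg by simp
  then have "0 \<le> F g h' - F g h" using den by (simp add: fss_diff_in_h)
  then show ?thesis by simp
qed

lemma best_reply_of_m_sign:
  assumes "g \<in> {0..1}" "g' \<in> {0..1}" "h \<in> {0..1}" "(g' - g) * m g' h \<le> 0"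
  shows "F g' h \<le> F g h"
proof -
  have den: "0 < den g' h" "0 < den g h" using den_pos assms by auto
  have "0 \<le> ga * den g' h * (g' - g)^2" using den ga_pos by simp
  then have "(g' - g) * m g' h - ga * den g' h * (g' - g)^2 \<le> 0" using assms(4) by linarith
  then have "C * ((g' - g) * m g' h - ga * den g' h * (g' - g)^2) / (den g' h * den g h) \<le> 0"
    using den C_nonneg by (simp add: mult_nonneg_nonpos divide_nonpos_pos)
  then have "F g' h - F g h \<le> 0" using den by (simp add: fss_diff_in_g)
  then show ?thesis by simp
qed

lemma mf_zero_one_le: "h \<in> {0..1} \<Longrightarrow> m 0 1 \<le> m 0 h"
proof -
  assume h: "h \<in> {0..1}"
  have "m 0 h - m 0 1 = (1 - h) * ga * (2*be - ga*(h + 1))"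
    unfolding mf_def by (simp add: algebra_simps power2_eq_square)
  moreover have "ga*(h + 1) \<le> ga*2" using h ga_pos by (intro mult_left_mono) auto
  then have "ga*(h + 1) \<le> 2*be" using be_ge_ga by linarith
  then have "0 \<le> (1 - h) * ga * (2*be - ga*(h + 1))"
    using h ga_pos be_ge_ga by (intro mult_nonneg_nonneg) auto
  ultimately show ?thesis by simp
qed

lemma qf_plus_mf_nonneg: "0 \<le> g \<Longrightarrow> 0 \<le> q g 1 + m g 1"
proof -
  assume g: "0 \<le> g"
  have "q g 1 + m g 1 = 2*((be - ga)*(1 - la - ga) + ga*g*((be - ga) + (1 - la - ga)) + (ga*g)^2)"
    unfolding mf_def qf_def by (simp add: algebra_simps power2_eq_square)
  then show ?thesis using g ga_pos be_ge_ga ga_lt by simp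
qed

lemma rf_root_between:
  assumes "0 \<le> g" "a \<le> 1" "q g 1 < 0" "0 < q g a"
  shows "q g (r g) = 0" "a < r g" "r g < 1"
proof -
  let ?P = "1 - la + ga*g"
  have "ga*1 \<le> ?P" using assms(1) ga_pos ga_lt mult_nonneg_nonneg[of ga g] by linarith
  moreover have "ga*a \<le> ga*1" using assms(2) ga_pos by simp
  ultimately have "ga*1 \<le> ?P" "ga*a \<le> ?P" by linarith+
  moreover have "(ga*1 - ?P)^2 < r_radicand g" "r_radicand g < (ga*a - ?P)^2"
    using assms(3,4) by (simp_all add: qf_completed_square)
  ultimately have "?P - sqrt (r_radicand g) < ga*1" "ga*a < ?P - sqrt (r_radicand g)"
    by (rule diff_sqrt_between)+
  then have "ga*a < ga * r g" "ga * r g < ga*1" using rf_eq ga_pos by simp_all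
  then show "a < r g" "r g < 1" using ga_pos by simp_all
  have "0 \<le> r_radicand g" using \<open>(ga*1 - ?P)^2 < r_radicand g\<close>
    zero_le_power2[of "ga*1 - ?P"] by linarith
  then show "q g (r g) = 0" using rf_eq ga_pos by (simp add: qf_completed_square)
qed

lemma wf_root_between:
  assumes "ga*h \<le> 1 - la" "0 \<le> b" "m 0 h < 0" "0 < m b h"
  shows "m (w h) h = 0" "0 < w h" "w h < b"
proof -
  let ?P = "ga*h - (1 - la)"
  have "0 \<le> ga*b" using assms(2) ga_pos by simp
  then have "?P \<le> ga*0" "?P \<le> ga*b" using assms(1) by auto
  moreover have "(ga*0 - ?P)^2 < w_radicand h" "w_radicand h < (ga*b - ?P)^2"
    using assms(3,4) by (simp_all add: mf_completed_square)
  ultimately have "ga*0 < ?P + sqrt (w_radicand h)" "?P + sqrt (w_radicand h) < ga*b"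
    by (rule add_sqrt_between)+
  then have "ga*0 < ga * w h" "ga * w h < ga*b" using wf_eq ga_pos by simp_all
  then show "0 < w h" "w h < b" using ga_pos by (simp_all add: zero_less_mult_iff)
  have "0 \<le> w_radicand h" using \<open>(ga*0 - ?P)^2 < w_radicand h\<close>
    zero_le_power2[of "ga*0 - ?P"] by linarith
  then show "m (w h) h = 0" using wf_eq ga_pos by (simp add: mf_completed_square)
qed

lemma nash_eq_of_first_order_conditions:
  assumes "smin \<in> {0..1}" "smax \<in> {0..1}" "g \<in> {0..smin}" "h \<in> {smax..1}"
    and "\<forall>g'\<in>{0..smin}. (g - g') * m g h \<le> 0"
    and "\<forall>h'\<in>{smax..1}. 0 \<le> (h - h') * q g h"
  shows "nash_eq F {0..smin} {smax..1} g h"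
proof -
  have "{0..smin} \<subseteq> {0..1}" "{smax..1} \<subseteq> {0..1}" using assms(1,2) by auto
  then show ?thesis
    unfolding nash_eq_def using assms(3-6) best_reply_of_m_sign best_reply_of_q_sign by (meson subsetD)
qed

lemma nash_equilibrium:
  assumes smin: "smin \<in> {0..1}" and smax: "smax \<in> {0..1}"
  shows "let (gs, hs) =
           (if m 0 1 \<ge> 0 then
              (if q 0 1 \<ge> 0 then (0, 1)
               else if q 0 smax \<le> 0 then (0, smax)
               else (0, r 0))
            else if m smin 1 \<le> 0 then (smin, 1)
            else (w 1, 1))
         in nash_eq F {0..smin} {smax..1} gs hs"
proof -
  note first_order = nash_eq_of_first_order_conditions[OF smin smax]
  have m_zero_nonneg: "0 \<le> m 0 h" if "0 \<le> m 0 1" "h \<in> {smax..1}" for h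
    using that smax mf_zero_one_le[of h] by auto
  consider (i_corner) "0 \<le> m 0 1" "0 \<le> q 0 1"
    | (i_edge) "0 \<le> m 0 1" "q 0 1 < 0" "q 0 smax \<le> 0"
    | (i_root) "0 \<le> m 0 1" "q 0 1 < 0" "0 < q 0 smax"
    | (ii) "m 0 1 < 0" "m smin 1 \<le> 0"
    | (iii) "m 0 1 < 0" "0 < m smin 1"
    by linarith
  then show ?thesis
  proof cases
    case i_corner
    have "nash_eq F {0..smin} {smax..1} 0 1"
      using i_corner smin smax by (intro first_order) (auto simp: mult_le_0_iff)
    with i_corner show ?thesis by simp
  next
    case i_edge
    have "nash_eq F {0..smin} {smax..1} 0 smax"
      using i_edge smin smax m_zero_nonneg[of smax]
      by (intro first_order) (auto simp: mult_le_0_iff zero_le_mult_iff)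
    with i_edge show ?thesis by simp
  next
    case i_root
    note root = rf_root_between[of 0 smax, OF _ _ i_root(2,3)]
    have "nash_eq F {0..smin} {smax..1} 0 (r 0)"
      using i_root smin smax root m_zero_nonneg[of "r 0"] by (intro first_order) (auto simp: mult_le_0_iff)
    with i_root show ?thesis by simp
  next
    case ii
    have "0 \<le> q smin 1" using ii qf_plus_mf_nonneg[of smin] smin by auto
    then have "nash_eq F {0..smin} {smax..1} smin 1"
      using ii smin smax by (intro first_order) (auto simp: mult_le_0_iff)
    with ii show ?thesis by simp
  next
    case iii
    note root = wf_root_between[of 1 smin, OF _ _ iii]
    have "0 \<le> q (w 1) 1" using root qf_plus_mf_nonneg[of "w 1"] smin ga_lt by auto
    then have "nash_eq F {0..smin} {smax..1} (w 1) 1"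
      using iii smin smax root ga_lt by (intro first_order) auto
    with iii show ?thesis by simp
  qed
qed

end

theorem theorem3:
  fixes n :: nat and W :: "real mat" and c s :: "real vec" and \<beta> \<gamma> :: real
  assumes n_pos: "n > 0"
    and W_dim: "W \<in> carrier_mat n n"
    and W_nonneg: "\<forall>i<n. \<forall>j<n. W $$ (i,j) \<ge> 0"
    and W_diag: "\<forall>i<n. W $$ (i,i) = 0"
    and c_dim: "c \<in> carrier_vec n"
    and c_pos: "\<forall>i<n. c $ i > 0"
    and c_eig: "transpose_mat W *\<^sub>v c = spec_rad W \<cdot>\<^sub>v c"
    and beta_gamma: "\<beta> \<ge> \<gamma>" and gamma_pos: "\<gamma> > 0"
    and norm_cond: "1 - max (norm_inf_mat W) (norm_one_mat W) > max (2*\<beta>) (4*\<gamma>)"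
    and s_dim: "s \<in> carrier_vec n"
    and s_range: "\<forall>i<n. 0 \<le> s $ i \<and> s $ i \<le> 1"
  defines "smax \<equiv> Max {s $ i | i. i < n}"
    and "smin \<equiv> Min {s $ i | i. i < n}"
    and "F \<equiv> fss (spec_rad W) \<beta> \<gamma> (shat n c s) (chi n W c s) (csum n c)"
    and "q \<equiv> qf (spec_rad W) \<beta> \<gamma> (shat n c s) (chi n W c s)"
    and "m \<equiv> mf (spec_rad W) \<beta> \<gamma> (shat n c s) (chi n W c s)"
    and "r \<equiv> rf (spec_rad W) \<beta> \<gamma> (shat n c s) (chi n W c s)"
    and "w \<equiv> wf (spec_rad W) \<beta> \<gamma> (shat n c s) (chi n W c s)"
  shows "let (gs, hs) =
           (if m 0 1 \<ge> 0 then
              (if q 0 1 \<ge> 0 then (0, 1)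
               else if q 0 smax \<le> 0 then (0, smax)
               else (0, r 0))
            else if m smin 1 \<le> 0 then (smin, 1)
            else (w 1, 1))
         in nash_eq F {0..smin} {smax..1} gs hs"
proof -
  have "spec_rad W \<le> norm_inf_mat W"
    using left_eigenvalue_le_norm_inf_mat[OF n_pos W_dim W_nonneg c_dim c_pos c_eig] .
  then have "\<gamma> < 1 - spec_rad W" using norm_cond gamma_pos by linarith
  moreover have "0 \<le> csum n c"
    unfolding csum_def using c_pos by (intro sum_nonneg) (simp add: less_imp_le)
  ultimately interpret opinion_game "spec_rad W" \<beta> \<gamma> "shat n c s" "chi n W c s" "csum n c"
    using gamma_pos beta_gamma by unfold_locales
  have "smin \<in> {0..1}" "smax \<in> {0..1}"
    unfolding smin_def smax_def using Min_Max_entries_in[OF n_pos, of s "{0..1}"] s_range by auto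
  then show ?thesis
    unfolding F_def q_def m_def r_def w_def by (rule nash_equilibrium)
qed

end
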